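(* Let $n\ge 1$, $k\ge 2$, $\mathcal{K}$ a set of size $k$, $\epsilon\ge 0$ and $p=e^\epsilon/(k-1+e^\epsilon)$. Then $\mathbf{S}\mathbf{N}\equiv\mathbf{S}^r\mathbf{N}^r$.
   Context: A dataset is $x\in\mathcal{K}^n$; its histogram $h(x)$ is the map $\kappa\mapsto|\{i:x_i=\kappa\}|$; $\mathcal{Z}$ is the set of histograms and $\#z$ the number of datasets with histogram $z$. Channels are row-stochastic matrices; cascading is matrix multiplication. Full $k$-RR channel $\mathbf{N}:\mathcal{K}^n\to\mathcal{K}^n$: $\mathbf{N}_{x,y}=\prod_{i=0}^{n-1}q(y_i\mid x_i)$, $q(b\mid a)=p$ if $b=a$, $(1-p)/(k-1)$ otherwise. Shuffle channel $\mathbf{S}:\mathcal{K}^n\to\mathcal{K}^n$: $\mathbf{S}_{x,y}=1/\#h(x)$ if $h(y)=h(x)$, else $0$. Reduced shuffle $\mathbf{S}^r:\mathcal{K}^n\to\mathcal{Z}$: $\mathbf{S}^r_{x,z}=1$ if $h(x)=z$, else $0$. Reduced $k$-RR $\mathbf{N}^r:\mathcal{Z}\to\mathcal{Z}$: $\mathbf{N}^r_{z',z}=\frac{1}{\#z'}\sum_{x':h(x')=z'}\sum_{y:h(y)=z}\mathbf{N}_{x',y}$. For prior $\pi$ and gain function $g:\mathcal{W}\times\mathcal{X}\to[0,\infty)$ ($\mathcal{W}$ finite nonempty), $V_g[\pi\triangleright\mathbf{C}]=\sum_{y}\max_{w}\sum_{x}\pi_x\mathbf{C}_{x,y}g(w,x)$;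 channels with the same input set are equivalent ($\equiv$) iff they have equal posterior vulnerability for all priors and gain functions. *)

theory Defs
  imports Complex_Main
begin

text \<open>Alphabet \<K>: a finite type 'k with k = CARD('k). Datasets: lists of length n.
Channels: real-valued matrices C :: 'a \<Rightarrow> 'b \<Rightarrow> real, with explicit input/output sets.\<close>

definition datasets :: "nat \<Rightarrow> ('k::finite) list set" where
  "datasets n = {xs. length xs = n}"

definition hist :: "'k list \<Rightarrow> ('k \<Rightarrow> nat)" where
  "hist xs = (\<lambda>\<kappa>. card {i. i < length xs \<and> xs ! i = \<kappa>})"

definition histograms :: "nat \<Rightarrow> (('k::finite) \<Rightarrow> nat) set" where
  "histograms n = hist ` datasets n"

definition num_with_hist :: "nat \<Rightarrow> (('k::finite) \<Rightarrow> nat) \<Rightarrow> nat" where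
  "num_with_hist n z = card {x \<in> datasets n. hist x = z}"

definition cascade :: "'b set \<Rightarrow> ('a \<Rightarrow> 'b \<Rightarrow> real) \<Rightarrow> ('b \<Rightarrow> 'c \<Rightarrow> real) \<Rightarrow> 'a \<Rightarrow> 'c \<Rightarrow> real" where
  "cascade B C D = (\<lambda>x z. \<Sum>y\<in>B. C x y * D y z)"

definition krr_q :: "real \<Rightarrow> ('k::finite) \<Rightarrow> 'k \<Rightarrow> real" where
  "krr_q p b a = (if b = a then p else (1 - p) / (real (card (UNIV :: 'k set)) - 1))"

definition krr_N :: "real \<Rightarrow> nat \<Rightarrow> ('k::finite) list \<Rightarrow> 'k list \<Rightarrow> real" where
  "krr_N p n x y = (\<Prod>i<n. krr_q p (y ! i) (x ! i))"

definition shuffle_S :: "nat \<Rightarrow> ('k::finite) list \<Rightarrow> 'k list \<Rightarrow> real" where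
  "shuffle_S n x y = (if hist y = hist x then 1 / real (num_with_hist n (hist x)) else 0)"

definition shuffle_Sr :: "('k::finite) list \<Rightarrow> ('k \<Rightarrow> nat) \<Rightarrow> real" where
  "shuffle_Sr x z = (if hist x = z then 1 else 0)"

definition krr_Nr :: "real \<Rightarrow> nat \<Rightarrow> (('k::finite) \<Rightarrow> nat) \<Rightarrow> ('k \<Rightarrow> nat) \<Rightarrow> real" where
  "krr_Nr p n z' z = 1 / real (num_with_hist n z') *
     (\<Sum>x'\<in>{x' \<in> datasets n. hist x' = z'}. \<Sum>y\<in>{y \<in> datasets n. hist y = z}. krr_N p n x' y)"

definition post_vuln :: "'a set \<Rightarrow> 'b set \<Rightarrow> nat set \<Rightarrow> ('a \<Rightarrow> real) \<Rightarrow> (nat \<Rightarrow> 'a \<Rightarrow> real)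
    \<Rightarrow> ('a \<Rightarrow> 'b \<Rightarrow> real) \<Rightarrow> real" where
  "post_vuln X Y W \<pi> g C = (\<Sum>y\<in>Y. Max ((\<lambda>w. \<Sum>x\<in>X. \<pi> x * C x y * g w x) ` W))"

text \<open>Equivalence of channels with common input set X: equal posterior vulnerability for
all priors (probability distributions on X) and all gain functions g : W \<times> X \<rightarrow> [0,\<infinity>),
W finite nonempty (represented, without loss of generality, as a subset of nat).\<close>
definition chan_equiv :: "'a set \<Rightarrow> 'b set \<Rightarrow> ('a \<Rightarrow> 'b \<Rightarrow> real) \<Rightarrow> 'c set \<Rightarrow> ('a \<Rightarrow> 'c \<Rightarrow> real) \<Rightarrow> bool" where
  "chan_equiv X Y1 C1 Y2 C2 \<longleftrightarrow>
     (\<forall>W \<pi> g. finite W \<and> W \<noteq> {} \<and> (\<forall>x\<in>X. 0 \<le> \<pi> x) \<and> (\<Sum>x\<in>X. \<pi> x) = 1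
        \<and> (\<forall>w\<in>W. \<forall>x\<in>X. 0 \<le> g w x)
        \<longrightarrow> post_vuln X Y1 W \<pi> g C1 = post_vuln X Y2 W \<pi> g C2)"

end

theory Submission
  imports Defs "HOL-Combinatorics.Permutations"
begin

text \<open>Since the k-RR channel acts coordinatewise, it commutes with permutations of the
coordinates; as S averages over all datasets with a given histogram, each column y of SN
depends on y only through its histogram. The column z of S^r N^r is the sum of the columns y of
SN with h(y) = z, so S^r N^r arises from SN by merging identical columns, and merging identical
columns only multiplies each term of the posterior vulnerability by a nonnegative factor that can
be pulled out of the maximum. In particular no hypothesis on n, k, \<epsilon> or p is needed.\<close>

lemma Max_image_mult_left:
  fixes f :: "'a \<Rightarrow> 'b::linordered_semiring"
  assumes "finite A" "A \<noteq> {}" "0 \<le> c"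
  shows "Max ((\<lambda>a. c * f a) ` A) = c * Max (f ` A)"
proof -
  have "mono ((*) c)"
    using assms(3) by (auto simp: mono_def mult_left_mono)
  from mono_Max_commute[OF this, of "f ` A"] assms show ?thesis
    by (simp add: image_image)
qed

lemma post_vuln_merge_columns:
  fixes C :: "'a \<Rightarrow> 'b \<Rightarrow> real" and D :: "'a \<Rightarrow> 'c \<Rightarrow> real"
  assumes "finite Y" "f ` Y = Z" "finite W" "W \<noteq> {}"
    and same_column:
      "\<And>x y y'. x \<in> X \<Longrightarrow> y \<in> Y \<Longrightarrow> y' \<in> Y \<Longrightarrow> f y = f y' \<Longrightarrow> C x y = C x y'"
    and merged: "\<And>x z. x \<in> X \<Longrightarrow> z \<in> Z \<Longrightarrow> D x z = (\<Sum>y\<in>{y\<in>Y. f y = z}. C x y)"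
  shows "post_vuln X Y W \<pi> g C = post_vuln X Z W \<pi> g D"
proof -
  define V where "V y = Max ((\<lambda>w. \<Sum>x\<in>X. \<pi> x * C x y * g w x) ` W)" for y
  have fiber: "(\<Sum>y\<in>{y\<in>Y. f y = z}. V y) = Max ((\<lambda>w. \<Sum>x\<in>X. \<pi> x * D x z * g w x) ` W)"
    if "z \<in> Z" for z
  proof -
    let ?F = "{y\<in>Y. f y = z}"
    obtain y0 where y0: "y0 \<in> Y" "f y0 = z"
      using \<open>z \<in> Z\<close> assms(2) by blast
    have D_eq: "D x z = card ?F * C x y0" if "x \<in> X" for x
      using merged[OF that \<open>z \<in> Z\<close>] same_column[OF that _ y0(1)] y0(2) by simp
    have "V y = V y0" if "y \<in> ?F" for y
      unfolding V_def using that y0 same_column[of _ y y0]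
      by (intro arg_cong[where f = Max] image_cong sum.cong refl) auto
    then have "(\<Sum>y\<in>?F. V y) = card ?F * V y0"
      by simp
    also have "\<dots> = Max ((\<lambda>w. card ?F * (\<Sum>x\<in>X. \<pi> x * C x y0 * g w x)) ` W)"
      unfolding V_def by (rule Max_image_mult_left[OF assms(3,4), symmetric]) simp
    also have "\<dots> = Max ((\<lambda>w. \<Sum>x\<in>X. \<pi> x * D x z * g w x) ` W)"
      by (simp add: sum_distrib_left D_eq mult_ac cong: sum.cong)
    finally show ?thesis .
  qed
  have "post_vuln X Y W \<pi> g C = (\<Sum>z\<in>Z. \<Sum>y\<in>{y\<in>Y. f y = z}. V y)"
    unfolding post_vuln_def V_def
    by (rule sum.group[symmetric]) (use assms(1,2) in auto)
  also have "\<dots> = post_vuln X Z W \<pi> g D"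
    unfolding post_vuln_def by (rule sum.cong) (simp_all add: fiber)
  finally show ?thesis .
qed

lemma hist_eq_count_mset: "hist xs = count (mset xs)"
  by (rule ext)
    (auto simp: hist_def count_mset count_list_eq_length_filter length_filter_conv_card eq_commute)

lemma finite_datasets: "finite (datasets n :: 'k::finite list set)"
proof -
  have "datasets n = {xs :: 'k list. set xs \<subseteq> UNIV \<and> length xs = n}"
    by (auto simp: datasets_def)
  then show ?thesis
    using finite_lists_length_eq[of "UNIV :: 'k set" n] by simp
qed

lemma permute_list_inv_cancel:
  assumes "\<tau> permutes {..<length xs}"
  shows "permute_list (inv \<tau>) (permute_list \<tau> xs) = xs"
    and "permute_list \<tau> (permute_list (inv \<tau>) xs) = xs"
  using permute_list_compose[of "inv \<tau>" xs \<tau>] permute_list_compose[of \<tau> xs "inv \<tau>"]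
    assms permutes_inv[OF assms] permutes_inv_o[OF assms] by simp_all

lemma bij_betw_permute_list_hist_class:
  assumes "\<tau> permutes {..<n}"
  shows "bij_betw (permute_list \<tau>) {x \<in> datasets n. hist x = c} {x \<in> datasets n. hist x = c}"
  by (rule bij_betw_byWitness[where f' = "permute_list (inv \<tau>)"])
    (use assms permutes_inv[OF assms] in
      \<open>auto simp: datasets_def hist_eq_count_mset permute_list_inv_cancel\<close>)

lemma krr_N_permute_list:
  assumes "\<tau> permutes {..<n}" "length x = n" "length y = n"
  shows "krr_N p n (permute_list \<tau> x) (permute_list \<tau> y) = krr_N p n x y"
proof -
  have "krr_N p n (permute_list \<tau> x) (permute_list \<tau> y) = (\<Prod>i<n. krr_q p (y ! \<tau> i) (x ! \<tau> i))"
    unfolding krr_N_def using assms by (intro prod.cong) (auto simp: permute_list_nth)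
  also have "\<dots> = krr_N p n x y"
    using prod.permute[OF assms(1), of "\<lambda>i. krr_q p (y ! i) (x ! i)"] by (simp add: krr_N_def)
  finally show ?thesis .
qed

lemma sum_krr_N_hist_class_cong:
  assumes "length y = n" "length y' = n" "hist y = hist y'"
  shows "(\<Sum>x\<in>{x \<in> datasets n. hist x = c}. krr_N p n x y)
       = (\<Sum>x\<in>{x \<in> datasets n. hist x = c}. krr_N p n x y')"
proof -
  let ?H = "{x \<in> datasets n. hist x = c}"
  have "mset y = mset y'"
    using assms(3) by (simp add: hist_eq_count_mset count_inject)
  then obtain \<tau> where \<tau>: "\<tau> permutes {..<n}" "permute_list \<tau> y' = y"
    using assms(2) by (metis mset_eq_permutation)
  have "(\<Sum>x\<in>?H. krr_N p n x y') = (\<Sum>x\<in>?H. krr_N p n (permute_list \<tau> x) y)"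
    using \<tau> assms(2) by (intro sum.cong refl) (auto simp: datasets_def krr_N_permute_list)
  also have "\<dots> = (\<Sum>x\<in>?H. krr_N p n x y)"
    by (rule sum.reindex_bij_betw[OF bij_betw_permute_list_hist_class[OF \<tau>(1)]])
  finally show ?thesis ..
qed

lemma cascade_shuffle_krr:
  fixes x y :: "'k::finite list"
  assumes "x \<in> datasets n"
  shows "cascade (datasets n) (shuffle_S n) (krr_N p n) x y
     = 1 / real (num_with_hist n (hist x))
         * (\<Sum>x'\<in>{x' \<in> datasets n. hist x' = hist x}. krr_N p n x' y)"
proof -
  have "cascade (datasets n) (shuffle_S n) (krr_N p n) x y
      = (\<Sum>x'\<in>datasets n.
           if hist x' = hist x then 1 / real (num_with_hist n (hist x)) * krr_N p n x' y else 0)"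
    unfolding cascade_def shuffle_S_def by (intro sum.cong) auto
  also have "\<dots> = (\<Sum>x'\<in>{x' \<in> datasets n. hist x' = hist x}.
                       1 / real (num_with_hist n (hist x)) * krr_N p n x' y)"
    by (rule sum.inter_filter[OF finite_datasets, symmetric])
  finally show ?thesis
    by (simp add: sum_distrib_left)
qed

lemma cascade_shuffle_krr_hist_cong:
  fixes x y y' :: "'k::finite list"
  assumes "x \<in> datasets n" "y \<in> datasets n" "y' \<in> datasets n" "hist y = hist y'"
  shows "cascade (datasets n) (shuffle_S n) (krr_N p n) x y
       = cascade (datasets n) (shuffle_S n) (krr_N p n) x y'"
proof -
  have "length y = n" "length y' = n"
    using assms(2,3) by (simp_all add: datasets_def)
  from sum_krr_N_hist_class_cong[OF this assms(4), where c = "hist x" and p = p] show ?thesis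
    unfolding cascade_shuffle_krr[OF assms(1)] by (rule arg_cong)
qed

lemma cascade_reduced_shuffle_krr:
  fixes x :: "'k::finite list"
  assumes "x \<in> datasets n"
  shows "cascade (histograms n) shuffle_Sr (krr_Nr p n) x z
     = (\<Sum>y\<in>{y \<in> datasets n. hist y = z}. cascade (datasets n) (shuffle_S n) (krr_N p n) x y)"
proof -
  have "finite (histograms n :: ('k \<Rightarrow> nat) set)"
    unfolding histograms_def by (intro finite_imageI finite_datasets)
  moreover have "hist x \<in> histograms n"
    using assms by (simp add: histograms_def)
  moreover have "cascade (histograms n) shuffle_Sr (krr_Nr p n) x z
      = (\<Sum>z'\<in>histograms n. if hist x = z' then krr_Nr p n z' z else 0)"
    unfolding cascade_def shuffle_Sr_def by (intro sum.cong) auto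
  ultimately have "cascade (histograms n) shuffle_Sr (krr_Nr p n) x z = krr_Nr p n (hist x) z"
    by simp
  also have "\<dots> = (\<Sum>y\<in>{y \<in> datasets n. hist y = z}.
                       cascade (datasets n) (shuffle_S n) (krr_N p n) x y)"
    unfolding krr_Nr_def cascade_shuffle_krr[OF assms] sum_distrib_left by (rule sum.swap)
  finally show ?thesis .
qed

theorem mainTheorem5:
  fixes n :: nat and \<epsilon> p :: real
  assumes "n \<ge> 1" and "card (UNIV :: 'k::finite set) \<ge> 2" and "\<epsilon> \<ge> 0"
    and "p = exp \<epsilon> / (real (card (UNIV :: 'k set)) - 1 + exp \<epsilon>)"
  shows "chan_equiv (datasets n :: 'k list set)
           (datasets n) (cascade (datasets n) (shuffle_S n) (krr_N p n))
           (histograms n) (cascade (histograms n) shuffle_Sr (krr_Nr p n))"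
  unfolding chan_equiv_def
proof (intro allI impI, elim conjE)
  fix W :: "nat set" and \<pi> :: "'k list \<Rightarrow> real" and g
  assume W: "finite W" "W \<noteq> {}"
  show "post_vuln (datasets n) (datasets n) W \<pi> g (cascade (datasets n) (shuffle_S n) (krr_N p n))
      = post_vuln (datasets n) (histograms n) W \<pi> g (cascade (histograms n) shuffle_Sr (krr_Nr p n))"
    by (rule post_vuln_merge_columns[OF finite_datasets histograms_def[symmetric] W])
      (assumption | rule cascade_shuffle_krr_hist_cong cascade_reduced_shuffle_krr)+
qed

end
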